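(* Let $p>q>0$ be coprime integers and represent the lens space $L_{p,q}$ as the union of two solid tori glued along their common boundary torus $T$. Fix any basis of $\pi_1(T)=H_1(T;\mathbb Z)=\mathbb Z^2$, and let $r_1,r_2\in\mathbb Q\cup\{\infty\}$ be the slopes of the meridians $\mu_1,\mu_2$ of the two solid tori. Then $d_c(r_1,r_2)=E(p,q)-1$.
   Context: The slope of a primitive class $(m,n)\in\mathbb Z^2$ is $m/n\in\mathbb Q\cup\{\infty\}$. Hyperbolic plane is the upper half-plane with absolute $\mathbb R\cup\{\infty\}$; the Farey tesselation consists of the geodesics joining $m/n$ and $m'/n'$ ($\infty=1/0$) with $|mn'-nm'|=1$. For distinct rational (or infinite) absolute points $r_1,r_2$, $d_c(r_1,r_2)$ is the number of Farey lines intersecting the geodesic from $r_1$ to $r_2$ (lines merely sharing an ideal endpoint do not count). For coprime positive integers $p,q$, $E(p,q)$ is the number of subtractions in the subtractive Euclid algorithm converting $(p,q)$ into $(0,1)$, i.e. the sum of the partial quotients of the continued fraction of $p/q$. *)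

theory Defs
  imports Complex_Main
begin

text \<open>Points of the absolute that we use: \<open>\<rat> \<union> {\<infinity>}\<close>, encoded as \<open>rat option\<close>
  with \<open>None\<close> standing for \<open>\<infinity> = 1/0\<close>.\<close>

definition slope :: "int \<times> int \<Rightarrow> rat option" where
  "slope v = (if snd v = 0 then None else Some (of_int (fst v) / of_int (snd v)))"

fun geodesic :: "rat option \<Rightarrow> rat option \<Rightarrow> complex set" where
  "geodesic (Some a) (Some b) =
     {z. Im z > 0 \<and> cmod (z - complex_of_real ((real_of_rat a + real_of_rat b) / 2))
                      = \<bar>real_of_rat b - real_of_rat a\<bar> / 2}"
| "geodesic (Some a) None = {z. Im z > 0 \<and> Re z = real_of_rat a}"
| "geodesic None (Some b) = {z. Im z > 0 \<and> Re z = real_of_rat b}"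
| "geodesic None None = {}"

definition farey_lines :: "rat option set set" where
  "farey_lines = {{slope (m, n), slope (m', n')} | m n m' n' :: int. \<bar>m * n' - n * m'\<bar> = 1}"

text \<open>\<open>d_c r1 r2\<close>: number of Farey lines meeting the geodesic from \<open>r1\<close> to \<open>r2\<close>
  (a line sharing only an ideal endpoint does not meet it in the hyperbolic plane;
  the line \<open>{r1,r2}\<close> itself is not counted).\<close>
definition d_c :: "rat option \<Rightarrow> rat option \<Rightarrow> nat" where
  "d_c r1 r2 = card {L \<in> farey_lines. L \<noteq> {r1, r2} \<and>
       (\<exists>x y. L = {x, y} \<and> geodesic x y \<inter> geodesic r1 r2 \<noteq> {})}"

fun euclid_sub :: "nat \<Rightarrow> nat \<Rightarrow> nat" where
  "euclid_sub p q =
     (if p = 0 \<or> q = 0 then 0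
      else if q \<le> p then Suc (euclid_sub (p - q) q)
      else Suc (euclid_sub p (q - p)))"

end

theory Submission
  imports Defs
begin

(* Two geodesics with distinct endpoints meet iff their endpoint pairs interlace on the circle
   \<rat> \<union> {\<infinity>}, i.e. iff the product of four 2x2 determinants of homogeneous coordinates is
   negative.  This condition and the set of Farey lines are invariant under integer matrices
   of determinant \<plusminus>1, so d_c is, too, and the meridians can be moved to \<infinity> and q/p.
   Farey lines never cross one another (Pluecker identity).  Hence the Farey lines crossing the
   vertical geodesic over x = q/p are the fan of lines {0, 1/k} with k x < 1, counted by
   (p - 1) div q, together with the lines crossing the geodesic from 0 to x; the map
   y \<mapsto> 1/y - p div q sends the latter configuration to (\<infinity>, (p mod q)/q).  The resulting
   recursion is that of the Euclidean algorithm. *)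

section \<open>Homogeneous coordinates and interlacing pairs\<close>

definition det2 :: "'a::comm_ring \<times> 'a \<Rightarrow> 'a \<times> 'a \<Rightarrow> 'a" where
  "det2 u v = fst u * snd v - snd u * fst v"

lemma det2_zero [simp]: "det2 (0, 0) v = 0" "det2 u (0, 0) = 0"
  by (simp_all add: det2_def)

definition proj :: "rat \<times> rat \<Rightarrow> rat option" where
  "proj v = (if snd v = 0 then None else Some (fst v / snd v))"

definition homog :: "rat option \<Rightarrow> rat \<times> rat" where
  "homog r = (case r of None \<Rightarrow> (1, 0) | Some x \<Rightarrow> (x, 1))"

lemma homog_simps [simp]: "homog None = (1, 0)" "homog (Some x) = (x, 1)"
  by (simp_all add: homog_def)

lemma proj_homog [simp]: "proj (homog r) = r"
  by (cases r) (simp_all add: proj_def)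

lemma homog_nonzero: "homog r \<noteq> (0, 0)"
  by (cases r) simp_all

lemma slope_eq_proj: "slope v = proj (map_prod of_int of_int v)"
  by (cases v) (simp add: slope_def proj_def)

definition bracket :: "rat option \<Rightarrow> rat option \<Rightarrow> rat" where
  "bracket r s = det2 (homog r) (homog s)"

lemma bracket_simps [simp]:
  "bracket None None = 0" "bracket None (Some y) = 1" "bracket (Some x) None = -1"
  "bracket (Some x) (Some y) = x - y"
  by (simp_all add: bracket_def det2_def)

(* The pairs {x, y} and {u, v} separate each other on the circle \<rat> \<union> {\<infinity>}. *)
definition linked :: "rat option \<Rightarrow> rat option \<Rightarrow> rat option \<Rightarrow> rat option \<Rightarrow> bool" where
  "linked x y u v \<longleftrightarrow> bracket x u * bracket y v * bracket x v * bracket y u < 0"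

lemma linked_commute: "linked y x u v \<longleftrightarrow> linked x y u v" "linked x y v u \<longleftrightarrow> linked x y u v"
  unfolding linked_def by (simp_all add: mult_ac)

lemma linked_swap: "linked u v x y \<longleftrightarrow> linked x y u v"
  unfolding linked_def bracket_def det2_def by (simp add: algebra_simps)

lemma linked_imp_distinct: "linked x y u v \<Longrightarrow> x \<noteq> u \<and> x \<noteq> v \<and> y \<noteq> u \<and> y \<noteq> v"
  unfolding linked_def bracket_def det2_def by auto

lemma linked_Some_iff:
  "linked None (Some b) (Some c) (Some d) \<longleftrightarrow> (b - c) * (b - d) < 0"
  "linked (Some a) (Some b) None (Some d) \<longleftrightarrow> (a - d) * (b - d) < 0"
  "linked (Some a) (Some b) (Some c) (Some d) \<longleftrightarrow> (a - c) * (b - d) * (a - d) * (b - c) < 0"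
proof -
  have "-1 * (b - d) * (a - d) * -1 = (a - d) * (b - d)" by (simp add: algebra_simps)
  then show "linked (Some a) (Some b) None (Some d) \<longleftrightarrow> (a - d) * (b - d) < 0"
    unfolding linked_def bracket_simps by (simp only:)
qed (simp_all add: linked_def mult.commute)

definition smult2 :: "'a::times \<Rightarrow> 'a \<times> 'a \<Rightarrow> 'a \<times> 'a" where
  "smult2 l v = (l * fst v, l * snd v)"

lemma proj_smult2: "l \<noteq> 0 \<Longrightarrow> proj (smult2 l v) = proj v"
  by (simp add: proj_def smult2_def)

lemma det2_smult2: "det2 (smult2 l u) (smult2 k v) = l * k * det2 u v"
  by (simp add: det2_def smult2_def algebra_simps)

lemma smult2_homog_proj:
  assumes "v \<noteq> (0, 0)"
  shows "\<exists>l. l \<noteq> 0 \<and> v = smult2 l (homog (proj v))"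
proof (cases "snd v = 0")
  case True
  then show ?thesis
    using assms by (intro exI[of _ "fst v"]) (cases v; simp add: proj_def smult2_def)
next
  case False
  then show ?thesis by (intro exI[of _ "snd v"]) (cases v; simp add: proj_def smult2_def)
qed

lemma linked_proj_iff:
  assumes "u \<noteq> (0, 0)" "v \<noteq> (0, 0)" "w \<noteq> (0, 0)" "z \<noteq> (0, 0)"
  shows "linked (proj u) (proj v) (proj w) (proj z) \<longleftrightarrow>
    det2 u w * det2 v z * det2 u z * det2 v w < 0"
proof -
  obtain l where l: "\<And>a. a \<noteq> (0, 0) \<Longrightarrow> l a \<noteq> 0 \<and> a = smult2 (l a) (homog (proj a))"
    using smult2_homog_proj by metis
  have det2: "det2 a b = l a * l b * bracket (proj a) (proj b)"
    if "a \<noteq> (0, 0)" "b \<noteq> (0, 0)" for a b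
  proof -
    have "det2 a b = det2 (smult2 (l a) (homog (proj a))) (smult2 (l b) (homog (proj b)))"
      using l that by metis
    then show ?thesis by (simp add: det2_smult2 bracket_def)
  qed
  have "det2 u w * det2 v z * det2 u z * det2 v w = (l u * l v * l w * l z)\<^sup>2 *
      (bracket (proj u) (proj w) * bracket (proj v) (proj z) * bracket (proj u) (proj z) *
        bracket (proj v) (proj w))"
    using assms by (simp add: det2 power2_eq_square mult_ac)
  moreover have "0 < (l u * l v * l w * l z)\<^sup>2" using l assms by simp
  ultimately show ?thesis by (simp add: linked_def mult_less_0_iff)
qed

lemma det2_eq_0_if_proj_eq:
  assumes "u \<noteq> (0, 0)" "v \<noteq> (0, 0)" "proj u = proj v"
  shows "det2 u v = 0"
proof -
  define h where "h = homog (proj v)"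
  obtain k l where "u = smult2 k h" "v = smult2 l h"
    using smult2_homog_proj assms unfolding h_def by metis
  then have "det2 u v = k * l * det2 h h"
    by (simp add: det2_smult2)
  then show ?thesis by (simp add: det2_def)
qed

section \<open>Intersections of geodesics\<close>

lemma mem_geodesic_Some_Some:
  "z \<in> geodesic (Some a) (Some b) \<longleftrightarrow>
     0 < Im z \<and> (Re z - of_rat a) * (Re z - of_rat b) + (Im z)\<^sup>2 = 0"
proof -
  let ?m = "(of_rat a + of_rat b) / 2" and ?c = "\<bar>of_rat b - of_rat a\<bar> / (2::real)"
  have "cmod (z - complex_of_real ?m) = ?c \<longleftrightarrow> (cmod (z - complex_of_real ?m))\<^sup>2 = ?c\<^sup>2"
    by (simp add: power2_eq_iff_nonneg)
  also have "(cmod (z - complex_of_real ?m))\<^sup>2 = (Re z - ?m)\<^sup>2 + (Im z)\<^sup>2"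
    by (simp add: cmod_power2)
  also have "(Re z - ?m)\<^sup>2 + (Im z)\<^sup>2 = ?c\<^sup>2 \<longleftrightarrow>
      (Re z - of_rat a) * (Re z - of_rat b) + (Im z)\<^sup>2 = 0"
  proof -
    have "(Re z - ?m)\<^sup>2 - ?c\<^sup>2 = (Re z - of_rat a) * (Re z - of_rat b)"
      by (simp add: power2_eq_square field_simps)
    then show ?thesis by linarith
  qed
  finally show ?thesis by simp
qed

lemma ex_complex_iff: "(\<exists>z. P (Re z) (Im z)) \<longleftrightarrow> (\<exists>x y. P x y)"
  by (metis complex.sel)

lemma ex_pos_add_square_eq_0_iff: "(\<exists>y::real. 0 < y \<and> c + y\<^sup>2 = 0) \<longleftrightarrow> c < 0"
proof
  assume "c < 0"
  then show "\<exists>y. 0 < y \<and> c + y\<^sup>2 = 0" by (intro exI[of _ "sqrt (- c)"]) simp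
qed (metis add_less_same_cancel2 zero_less_power2 less_irrefl)

lemma between_distinct_reals: "x \<noteq> y \<Longrightarrow> ((x + y) / 2 - x) * ((x + y) / 2 - y) < (0::real)"
proof -
  assume "x \<noteq> y"
  have "((x + y) / 2 - x) * ((x + y) / 2 - y) = - ((x - y) / 2)\<^sup>2"
    by (simp add: power2_eq_square field_simps)
  then show ?thesis using \<open>x \<noteq> y\<close> by simp
qed

lemma radical_axis_height:
  fixes x y u v :: real
  assumes "u + v \<noteq> x + y"
  defines "X \<equiv> (u * v - x * y) / (u + v - x - y)"
  shows "(X - x) * (X - y) = (x - u) * (y - v) * (x - v) * (y - u) / (u + v - x - y)\<^sup>2"
proof -
  have "X - x = (u - x) * (v - x) / (u + v - x - y)" "X - y = (u - y) * (v - y) / (u + v - x - y)"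
    using assms by (simp_all add: X_def field_simps)
  then have "(X - x) * (X - y) = (u - x) * (v - x) * ((u - y) * (v - y)) / (u + v - x - y)\<^sup>2"
    by (simp add: power2_eq_square)
  also have "(u - x) * (v - x) * ((u - y) * (v - y)) = (x - u) * (y - v) * (x - v) * (y - u)"
    by (simp add: algebra_simps)
  finally show ?thesis .
qed

(* A point X + iY of the semicircles over [x, y] and [u, v] satisfies
   (X - x) * (X - y) = - Y\<^sup>2 = (X - u) * (X - v); here Y has been eliminated. *)
lemma ex_common_height_iff:
  fixes x y u v :: real
  assumes "x \<noteq> y"
  shows "(\<exists>X. (X - x) * (X - y) < 0 \<and> (X - x) * (X - y) = (X - u) * (X - v)) \<longleftrightarrow>
         {x, y} = {u, v} \<or> (x - u) * (y - v) * (x - v) * (y - u) < 0"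
proof -
  define D where "D = u + v - x - y"
  define P where "P = (x - u) * (y - v) * (x - v) * (y - u)"
  have same_value: "(X - x) * (X - y) = (X - u) * (X - v) \<longleftrightarrow> X * D = u * v - x * y" for X
    unfolding D_def by (auto simp: algebra_simps)
  show ?thesis
  proof (cases "D = 0")
    case True
    then have v: "v = x + y - u" by (simp add: D_def)
    have "P = ((x - u) * (x - v))\<^sup>2"
      unfolding P_def v by (simp add: power2_eq_square algebra_simps)
    then have "\<not> P < 0" by simp
    moreover have "u * v = x * y \<longleftrightarrow> {x, y} = {u, v}"
    proof -
      have "u * v - x * y = - ((u - x) * (u - y))" unfolding v by (simp add: algebra_simps)
      then show ?thesis unfolding v by (auto simp: doubleton_eq_iff)
    qed
    moreover have "(\<exists>X. (X - x) * (X - y) < 0 \<and> (X - x) * (X - y) = (X - u) * (X - v)) \<longleftrightarrow>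
        u * v = x * y"
    proof
      assume "u * v = x * y"
      then show "\<exists>X. (X - x) * (X - y) < 0 \<and> (X - x) * (X - y) = (X - u) * (X - v)"
        by (intro exI[of _ "(x + y) / 2"] conjI between_distinct_reals[OF assms])
          (subst same_value, simp add: True)
    qed (use same_value True in auto)
    ultimately show ?thesis unfolding P_def by blast
  next
    case False
    define X where "X = (u * v - x * y) / D"
    have "(X - x) * (X - y) < 0 \<longleftrightarrow> P < 0"
      using False radical_axis_height[where x = x and y = y and u = u and v = v]
      by (simp add: X_def D_def P_def divide_less_0_iff)
    moreover have "Y * D = u * v - x * y \<longleftrightarrow> Y = X" for Y
      using False by (auto simp: X_def field_simps)
    moreover have "{x, y} \<noteq> {u, v}"
      using False by (auto simp: D_def doubleton_eq_iff)
    ultimately show ?thesis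
      unfolding same_value P_def by auto
  qed
qed

lemma geodesic_commute: "geodesic y x = geodesic x y"
  by (cases x; cases y) (auto simp: abs_minus_commute add.commute)

lemma real_of_rat_neg_iff:
  "(of_rat a - of_rat s) * (of_rat a - of_rat t) < (0::real) \<longleftrightarrow> (a - s) * (a - t) < 0"
  "(of_rat a - of_rat c) * (of_rat b - of_rat d) * (of_rat a - of_rat d) * (of_rat b - of_rat c)
     < (0::real) \<longleftrightarrow> (a - c) * (b - d) * (a - d) * (b - c) < 0"
  by (simp_all only: of_rat_diff[symmetric] of_rat_mult[symmetric] of_rat_less_0_iff)

lemma mem_geodesic_None_Some: "z \<in> geodesic None (Some a) \<longleftrightarrow> 0 < Im z \<and> Re z = of_rat a"
  by simp

lemma vertical_geodesics_meet_iff: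
  "geodesic None (Some a) \<inter> geodesic None (Some b) \<noteq> {} \<longleftrightarrow> a = b"
proof
  assume "a = b"
  then have "Complex (of_rat a) 1 \<in> geodesic None (Some a) \<inter> geodesic None (Some b)" by simp
  then show "geodesic None (Some a) \<inter> geodesic None (Some b) \<noteq> {}" by blast
qed auto

lemma vertical_semicircle_geodesics_meet_iff:
  "geodesic None (Some a) \<inter> geodesic (Some s) (Some t) \<noteq> {} \<longleftrightarrow> (a - s) * (a - t) < 0"
proof -
  have "geodesic None (Some a) \<inter> geodesic (Some s) (Some t) \<noteq> {} \<longleftrightarrow>
      (\<exists>Y. 0 < Y \<and> (of_rat a - of_rat s) * (of_rat a - of_rat t) + Y\<^sup>2 = (0::real))"
    unfolding ex_in_conv[symmetric] Int_iff mem_geodesic_Some_Some mem_geodesic_None_Some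
    by (metis complex.sel)
  also have "\<dots> \<longleftrightarrow> (a - s) * (a - t) < 0"
    by (simp add: ex_pos_add_square_eq_0_iff real_of_rat_neg_iff)
  finally show ?thesis .
qed

lemma semicircle_geodesics_meet_iff:
  assumes "a \<noteq> b"
  shows "geodesic (Some a) (Some b) \<inter> geodesic (Some c) (Some d) \<noteq> {} \<longleftrightarrow>
     {a, b} = {c, d} \<or> (a - c) * (b - d) * (a - d) * (b - c) < 0"
proof -
  let ?r = "real_of_rat"
  have "geodesic (Some a) (Some b) \<inter> geodesic (Some c) (Some d) \<noteq> {} \<longleftrightarrow>
      (\<exists>X Y. 0 < Y \<and> (X - ?r a) * (X - ?r b) + Y\<^sup>2 = 0 \<and> (X - ?r c) * (X - ?r d) + Y\<^sup>2 = 0)"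
    unfolding ex_in_conv[symmetric] Int_iff mem_geodesic_Some_Some ex_complex_iff[symmetric]
    by blast
  also have "\<dots> \<longleftrightarrow>
      (\<exists>X. (X - ?r a) * (X - ?r b) < 0 \<and> (X - ?r a) * (X - ?r b) = (X - ?r c) * (X - ?r d))"
    using ex_pos_add_square_eq_0_iff by (metis add.commute add_left_cancel)
  also have "\<dots> \<longleftrightarrow> {?r a, ?r b} = {?r c, ?r d} \<or>
      (?r a - ?r c) * (?r b - ?r d) * (?r a - ?r d) * (?r b - ?r c) < 0"
    using assms by (intro ex_common_height_iff) simp
  finally show ?thesis
    by (simp add: real_of_rat_neg_iff doubleton_eq_iff)
qed

lemma vertical_geodesic_meets_geodesic_iff:
  assumes "u \<noteq> v"
  shows "geodesic None (Some a) \<inter> geodesic u v \<noteq> {} \<longleftrightarrow>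
    {None, Some a} = {u, v} \<or> linked None (Some a) u v"
proof (cases u; cases v)
  fix s t assume "u = Some s" "v = Some t"
  then show ?thesis
    by (simp add: vertical_semicircle_geodesics_meet_iff linked_Some_iff doubleton_eq_iff
        del: geodesic.simps)
qed (use assms in \<open>auto simp: vertical_geodesics_meet_iff geodesic_commute[of "Some _" None]
  linked_def doubleton_eq_iff simp del: geodesic.simps\<close>)

lemma geodesic_cases:
  assumes "x \<noteq> y"
  obtains (vertical) a where "geodesic x y = geodesic None (Some a)" "{x, y} = {None, Some a}"
      "linked x y = linked None (Some a)"
    | (semicircle) a b where "x = Some a" "y = Some b" "a \<noteq> b"
proof (cases x)
  case None
  then obtain a where "y = Some a" using assms by (cases y) auto
  then show ?thesis using None vertical by simp
next
  case (Some a)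
  show ?thesis
  proof (cases y)
    case None
    then show ?thesis
      using Some vertical[of a]
      by (simp add: insert_commute fun_eq_iff linked_commute(1)[of "Some a" None])
  next
    case (Some b)
    then show ?thesis using \<open>x = Some a\<close> assms semicircle by simp
  qed
qed

lemma geodesics_meet_iff:
  assumes "x \<noteq> y" "u \<noteq> v"
  shows "geodesic x y \<inter> geodesic u v \<noteq> {} \<longleftrightarrow> {x, y} = {u, v} \<or> linked x y u v"
  using assms(1)
proof (cases rule: geodesic_cases)
  case (vertical a)
  then show ?thesis using vertical_geodesic_meets_geodesic_iff[OF assms(2)] by simp
next
  case xy: (semicircle a b)
  show ?thesis
    using assms(2)
  proof (cases rule: geodesic_cases)
    case (vertical c)
    then show ?thesis
      using vertical_geodesic_meets_geodesic_iff[OF assms(1), of c]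
      by (simp add: Int_commute linked_swap eq_commute[of "{x, y}"])
  next
    case (semicircle c d)
    then show ?thesis
      using xy semicircle_geodesics_meet_iff[OF xy(3), of c d]
      by (simp add: linked_Some_iff doubleton_eq_iff del: geodesic.simps)
  qed
qed

section \<open>Integer M\<ouml>bius transformations\<close>

(* (a, b, c, d) is the matrix with columns (a, b) and (c, d), as in the theorem. *)
type_synonym mat2 = "int \<times> int \<times> int \<times> int"

fun mat2_apply :: "mat2 \<Rightarrow> 'a::comm_ring_1 \<times> 'a \<Rightarrow> 'a \<times> 'a" where
  "mat2_apply (a, b, c, d) (x, y) = (of_int a * x + of_int c * y, of_int b * x + of_int d * y)"

fun mat2_det :: "mat2 \<Rightarrow> int" where
  "mat2_det (a, b, c, d) = a * d - b * c"

fun mat2_adj :: "mat2 \<Rightarrow> mat2" where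
  "mat2_adj (a, b, c, d) = (d, - b, - c, a)"

lemma mat2_adj_adj [simp]: "mat2_adj (mat2_adj A) = A"
  by (cases A) simp

lemma mat2_det_adj [simp]: "mat2_det (mat2_adj A) = mat2_det A"
  by (cases A) (simp add: algebra_simps)

lemma mat2_apply_smult2: "mat2_apply A (smult2 l v) = smult2 l (mat2_apply A v)"
  by (cases A; cases v) (simp add: smult2_def algebra_simps)

lemma mat2_apply_adj: "mat2_apply (mat2_adj A) (mat2_apply A v) = smult2 (of_int (mat2_det A)) v"
  by (cases A; cases v) (simp add: smult2_def algebra_simps)

lemma det2_mat2_apply: "det2 (mat2_apply A u) (mat2_apply A v) = of_int (mat2_det A) * det2 u v"
  by (cases A; cases u; cases v) (simp add: det2_def algebra_simps)

lemma mat2_apply_of_int: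
  "mat2_apply A (map_prod of_int of_int v) = map_prod of_int of_int (mat2_apply A v)"
  by (cases A; cases v) simp

lemma mat2_apply_zero [simp]: "mat2_apply A (0, 0) = (0, 0)"
  by (cases A) simp

lemma mat2_apply_eq_0_iff:
  fixes v :: "'a::{idom, ring_char_0} \<times> 'a"
  assumes "mat2_det A \<noteq> 0"
  shows "mat2_apply A v = (0, 0) \<longleftrightarrow> v = (0, 0)"
proof
  assume "mat2_apply A v = (0, 0)"
  then have "smult2 (of_int (mat2_det A)) v = (0, 0)"
    by (metis mat2_apply_adj mat2_apply_zero)
  then show "v = (0, 0)" using assms by (cases v) (simp add: smult2_def)
qed simp

definition moebius :: "mat2 \<Rightarrow> rat option \<Rightarrow> rat option" where
  "moebius A r = proj (mat2_apply A (homog r))"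

lemma moebius_proj: "v \<noteq> (0, 0) \<Longrightarrow> moebius A (proj v) = proj (mat2_apply A v)"
  by (metis smult2_homog_proj mat2_apply_smult2 proj_smult2 moebius_def)

lemma moebius_slope: "v \<noteq> (0, 0) \<Longrightarrow> moebius A (slope v) = slope (mat2_apply A v)"
  by (cases v)
    (simp add: slope_eq_proj moebius_proj mat2_apply_of_int[symmetric] del: mat2_apply.simps)

lemma moebius_adj: "mat2_det A \<noteq> 0 \<Longrightarrow> moebius (mat2_adj A) (moebius A r) = r"
  unfolding moebius_def
  by (simp add: moebius_proj[unfolded moebius_def] mat2_apply_eq_0_iff homog_nonzero
      mat2_apply_adj proj_smult2)

lemma inj_moebius: "mat2_det A \<noteq> 0 \<Longrightarrow> inj (moebius A)"
  by (rule inj_on_inverseI[of _ "moebius (mat2_adj A)"]) (rule moebius_adj)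

lemma linked_moebius:
  assumes "mat2_det A \<noteq> 0"
  shows "linked (moebius A x) (moebius A y) (moebius A u) (moebius A v) \<longleftrightarrow> linked x y u v"
proof -
  let ?e = "of_int (mat2_det A) :: rat"
  have "linked (moebius A x) (moebius A y) (moebius A u) (moebius A v) \<longleftrightarrow>
      (?e * bracket x u) * (?e * bracket y v) * (?e * bracket x v) * (?e * bracket y u) < 0"
    unfolding moebius_def using assms
    by (simp add: linked_proj_iff mat2_apply_eq_0_iff homog_nonzero det2_mat2_apply bracket_def)
  also have "\<dots> \<longleftrightarrow> ?e ^ 4 * (bracket x u * bracket y v * bracket x v * bracket y u) < 0"
    by (simp add: power4_eq_xxxx mult_ac)
  also have "\<dots> \<longleftrightarrow> linked x y u v"
    using assms by (simp add: linked_def mult_less_0_iff)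
  finally show ?thesis .
qed

section \<open>Farey lines\<close>

lemma farey_lines_iff: "L \<in> farey_lines \<longleftrightarrow> (\<exists>u v. L = {slope u, slope v} \<and> \<bar>det2 u v\<bar> = 1)"
  unfolding farey_lines_def det2_def by (simp add: split_paired_Ex)

lemma farey_line_slopes: "\<bar>det2 u v\<bar> = 1 \<Longrightarrow> {slope u, slope v} \<in> farey_lines"
  unfolding farey_lines_iff by blast

lemma det2_of_int: "det2 (map_prod of_int of_int u) (map_prod of_int of_int v) = of_int (det2 u v)"
  by (cases u; cases v) (simp add: det2_def)

lemma map_prod_of_int_eq_0_iff:
  "map_prod of_int of_int u = ((0, 0) :: 'a::ring_char_0 \<times> 'a) \<longleftrightarrow> u = (0, 0)"
  by (cases u) simp

lemma linked_slope_iff: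
  assumes "u \<noteq> (0, 0)" "v \<noteq> (0, 0)" "w \<noteq> (0, 0)" "z \<noteq> (0, 0)"
  shows "linked (slope u) (slope v) (slope w) (slope z) \<longleftrightarrow>
    det2 u w * det2 v z * det2 u z * det2 v w < 0"
  using assms unfolding slope_eq_proj
  by (simp add: linked_proj_iff map_prod_of_int_eq_0_iff det2_of_int flip: of_int_mult)

lemma farey_line_endpoints_distinct:
  assumes "{x, y} \<in> farey_lines"
  shows "x \<noteq> y"
proof
  assume "x = y"
  obtain u v :: "int \<times> int" where uv: "{x, y} = {slope u, slope v}" "\<bar>det2 u v\<bar> = 1"
    using assms unfolding farey_lines_iff by blast
  then have "slope u = slope v" using \<open>x = y\<close> by (auto simp: doubleton_eq_iff)
  moreover have "u \<noteq> (0, 0)" "v \<noteq> (0, 0)" using uv(2) by auto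
  ultimately have "det2 (map_prod of_int of_int u) (map_prod of_int of_int v :: rat \<times> rat) = 0"
    by (intro det2_eq_0_if_proj_eq) (simp_all add: slope_eq_proj map_prod_of_int_eq_0_iff)
  then show False using uv(2) by (simp add: det2_of_int)
qed

lemma abs_diff_ge_2_if_mult_neg: "a * b < 0 \<Longrightarrow> 2 \<le> \<bar>a - b\<bar>" for a b :: int
  by (auto simp: mult_less_0_iff)

lemma farey_lines_not_linked:
  assumes "{x, y} \<in> farey_lines" "{u, v} \<in> farey_lines"
  shows "\<not> linked x y u v"
proof
  assume linked: "linked x y u v"
  obtain a b c d where ab: "{x, y} = {slope a, slope b}" "\<bar>det2 a b\<bar> = 1"
    and cd: "{u, v} = {slope c, slope d}" "\<bar>det2 c d\<bar> = 1"
    using assms unfolding farey_lines_iff by blast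
  then have nonzero: "a \<noteq> (0, 0)" "b \<noteq> (0, 0)" "c \<noteq> (0, 0)" "d \<noteq> (0, 0)" by auto
  have "linked (slope a) (slope b) (slope c) (slope d)"
    using linked ab(1) cd(1) by (auto simp: doubleton_eq_iff linked_commute)
  then have "(det2 a c * det2 b d) * (det2 a d * det2 b c) < 0"
    using nonzero by (simp add: linked_slope_iff mult.assoc)
  \<comment> \<open>Pl\<uuml>cker relation: two integers of opposite signs cannot differ by \<open>\<plusminus>1\<close>.\<close>
  moreover have "det2 a c * det2 b d - det2 a d * det2 b c = det2 a b * det2 c d"
    by (simp add: det2_def algebra_simps)
  ultimately show False
    using abs_diff_ge_2_if_mult_neg ab(2) cd(2) by (fastforce simp: abs_mult)
qed

lemma moebius_farey_line:
  assumes "\<bar>mat2_det A\<bar> = 1" "L \<in> farey_lines"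
  shows "moebius A ` L \<in> farey_lines"
proof -
  obtain u v where uv: "L = {slope u, slope v}" "\<bar>det2 u v\<bar> = 1"
    using assms(2) unfolding farey_lines_iff by blast
  then have "u \<noteq> (0, 0)" "v \<noteq> (0, 0)" by (auto simp: det2_def)
  then have "moebius A ` L = {slope (mat2_apply A u), slope (mat2_apply A v)}"
    using uv(1) by (simp add: moebius_slope)
  moreover have "\<bar>det2 (mat2_apply A u) (mat2_apply A v)\<bar> = 1"
    using assms(1) uv(2) by (simp add: det2_mat2_apply abs_mult)
  ultimately show ?thesis unfolding farey_lines_iff by blast
qed

definition farey_crossing :: "rat option \<Rightarrow> rat option \<Rightarrow> rat option set set" where
  "farey_crossing r1 r2 = {L \<in> farey_lines. \<exists>x y. L = {x, y} \<and> linked x y r1 r2}"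

lemma d_c_eq_card_farey_crossing:
  assumes "r1 \<noteq> r2"
  shows "d_c r1 r2 = card (farey_crossing r1 r2)"
proof -
  have meet: "L \<noteq> {r1, r2} \<and> geodesic x y \<inter> geodesic r1 r2 \<noteq> {} \<longleftrightarrow> linked x y r1 r2"
    if "L = {x, y}" "L \<in> farey_lines" for L x y
    using that geodesics_meet_iff[OF farey_line_endpoints_distinct assms]
    by (auto dest: linked_imp_distinct simp: doubleton_eq_iff)
  have "L \<noteq> {r1, r2} \<and> (\<exists>x y. L = {x, y} \<and> geodesic x y \<inter> geodesic r1 r2 \<noteq> {}) \<longleftrightarrow>
      (\<exists>x y. L = {x, y} \<and> linked x y r1 r2)" if "L \<in> farey_lines" for L
    using meet[OF _ that] by metis
  then show ?thesis
    unfolding d_c_def farey_crossing_def by (metis (no_types, lifting) Collect_cong)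
qed

lemma moebius_farey_crossing_subset:
  assumes "\<bar>mat2_det A\<bar> = 1"
  shows "image (moebius A) ` farey_crossing r1 r2 \<subseteq> farey_crossing (moebius A r1) (moebius A r2)"
proof
  fix L' assume "L' \<in> image (moebius A) ` farey_crossing r1 r2"
  then obtain L x y where L: "L' = moebius A ` L" "L \<in> farey_lines" "L = {x, y}" "linked x y r1 r2"
    unfolding farey_crossing_def by blast
  have "L' \<in> farey_lines" using moebius_farey_line[OF assms L(2)] L(1) by simp
  moreover have "L' = {moebius A x, moebius A y}" using L(1,3) by simp
  moreover have "linked (moebius A x) (moebius A y) (moebius A r1) (moebius A r2)"
    using linked_moebius[of A] assms L(4) by simp
  ultimately show "L' \<in> farey_crossing (moebius A r1) (moebius A r2)"
    unfolding farey_crossing_def by blast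
qed

lemma bij_betw_moebius_farey_crossing:
  assumes "\<bar>mat2_det A\<bar> = 1"
  shows "bij_betw (image (moebius A)) (farey_crossing r1 r2)
           (farey_crossing (moebius A r1) (moebius A r2))"
proof (rule bij_betw_imageI)
  have det: "mat2_det A \<noteq> 0" using assms by auto
  show "inj_on (image (moebius A)) (farey_crossing r1 r2)"
    using inj_moebius[OF det] by (simp add: inj_on_def inj_image_eq_iff)
  have pullback: "moebius (mat2_adj A) ` L' \<in> farey_crossing r1 r2"
    if "L' \<in> farey_crossing (moebius A r1) (moebius A r2)" for L'
    using that moebius_farey_crossing_subset[of "mat2_adj A" "moebius A r1" "moebius A r2"] assms
    by (auto simp: moebius_adj[OF det])
  have "L' = moebius A ` moebius (mat2_adj A) ` L'" for L'
    using moebius_adj[of "mat2_adj A"] det by (simp add: image_image)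
  then have "farey_crossing (moebius A r1) (moebius A r2) \<subseteq>
      image (moebius A) ` farey_crossing r1 r2"
    using pullback by (blast intro: rev_image_eqI)
  then show "image (moebius A) ` farey_crossing r1 r2 =
      farey_crossing (moebius A r1) (moebius A r2)"
    using moebius_farey_crossing_subset[OF assms] by (rule antisym[rotated])
qed

lemma card_farey_crossing_moebius:
  assumes "\<bar>mat2_det A\<bar> = 1"
  shows "card (farey_crossing (moebius A r1) (moebius A r2)) = card (farey_crossing r1 r2)"
    and "finite (farey_crossing (moebius A r1) (moebius A r2)) \<longleftrightarrow> finite (farey_crossing r1 r2)"
  using bij_betw_same_card bij_betw_finite bij_betw_moebius_farey_crossing[OF assms]
  by metis+

lemma farey_crossing_farey_line: "{r1, r2} \<in> farey_lines \<Longrightarrow> farey_crossing r1 r2 = {}"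
  unfolding farey_crossing_def using farey_lines_not_linked by blast

lemma farey_line_through_0:
  assumes "{Some 0, r} \<in> farey_lines"
  shows "r = None \<or> (\<exists>k::int. r = Some (1 / of_int k))"
proof -
  obtain u v where uv: "slope u = Some 0" "slope v = r" "\<bar>det2 u v\<bar> = 1"
    using assms unfolding farey_lines_iff doubleton_eq_iff
    by (metis abs_minus_commute det2_def minus_diff_eq mult.commute)
  then have "fst u = 0" "snd u \<noteq> 0"
    by (auto simp: slope_def split: if_splits)
  then have "\<bar>snd u * fst v\<bar> = 1" using uv(3) by (simp add: det2_def)
  then have "\<bar>fst v\<bar> = 1" by (metis abs_zmult_eq_1 mult.commute)
  then have m: "fst v = 1 \<or> fst v = -1" by arith
  show ?thesis
  proof (cases "snd v = 0")
    case True
    then show ?thesis using uv(2) by (simp add: slope_def)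
  next
    case False
    have "r = Some (of_int (fst v) / of_int (snd v))"
      using uv(2) False by (simp add: slope_def)
    also have "of_int (fst v) / of_int (snd v) = 1 / (of_int (fst v * snd v) :: rat)"
      using m False by auto
    finally show ?thesis by blast
  qed
qed

lemma farey_line_None_0: "{None, Some 0} \<in> farey_lines"
  using farey_line_slopes[of "(1, 0)" "(0, 1)"] by (simp add: det2_def slope_def)

lemma farey_line_0_1: "{Some 0, Some 1} \<in> farey_lines"
  using farey_line_slopes[of "(0, 1)" "(1, 1)"] by (simp add: det2_def slope_def)

lemma farey_line_0_inverse: "0 < k \<Longrightarrow> {Some 0, Some (1 / of_int k)} \<in> farey_lines"
  using farey_line_slopes[of "(0, 1)" "(1, k)"] by (simp add: det2_def slope_def)

lemma farey_line_Some_Some_product_nonneg: "{Some a, Some b} \<in> farey_lines \<Longrightarrow> 0 \<le> a * b"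
  using farey_lines_not_linked[OF _ farey_line_None_0, of "Some a" "Some b"]
  by (simp add: linked_Some_iff mult.commute)

section \<open>The subtractive Euclidean algorithm\<close>

(* The defining equation would unfold indefinitely under the simplifier. *)
declare euclid_sub.simps [simp del]

lemma euclid_sub_0 [simp]: "euclid_sub 0 q = 0" "euclid_sub p 0 = 0"
  by (subst euclid_sub.simps, simp)+

lemma euclid_sub_commute: "euclid_sub q p = euclid_sub p q"
  by (induction p q rule: euclid_sub.induct) (subst (1 2) euclid_sub.simps, auto)

lemma euclid_sub_div_mod: "0 < q \<Longrightarrow> euclid_sub p q = p div q + euclid_sub (p mod q) q"
proof (induction p rule: less_induct)
  case (less p)
  show ?case
  proof (cases "q \<le> p")
    case True
    then have "euclid_sub p q = Suc (euclid_sub (p - q) q)"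
      using less.prems by (subst euclid_sub.simps) simp
    also have "\<dots> = Suc ((p - q) div q + euclid_sub ((p - q) mod q) q)"
      using less True by simp
    also have "\<dots> = p div q + euclid_sub (p mod q) q"
      using less.prems True by (simp add: le_div_geq le_mod_geq)
    finally show ?thesis .
  qed simp
qed

lemma euclid_sub_pos: "0 < p \<Longrightarrow> 0 < q \<Longrightarrow> 0 < euclid_sub p q"
  by (subst euclid_sub.simps) simp

lemma euclid_sub_pred_div_mod:
  assumes "coprime p q" "0 < q"
  shows "euclid_sub p q - 1 = (p - 1) div q + (euclid_sub q (p mod q) - 1)"
proof (cases "p mod q = 0")
  case True
  then have "q dvd p" by auto
  then have "q = 1"
    using assms(1) coprime_absorb_left[of q p] by (simp add: coprime_commute)
  then show ?thesis using euclid_sub_div_mod[of 1 p] by simp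
next
  case False
  then have "p = Suc (p - 1)" by (cases p) auto
  then have "(p - 1) div q = p div q"
    using False by (metis div_Suc)
  moreover have "0 < euclid_sub q (p mod q)"
    using False assms(2) by (simp add: euclid_sub_pos)
  ultimately show ?thesis
    using euclid_sub_div_mod[OF assms(2), of p] euclid_sub_commute[of q] by simp
qed

section \<open>Counting crossings in standard position\<close>

definition zero_fan :: "rat \<Rightarrow> rat option set set" where
  "zero_fan x = (\<lambda>k::nat. {Some 0, Some (1 / of_nat k)}) ` {k. 0 < k \<and> of_nat k * x < 1}"

lemma farey_line_0_mem_zero_fan:
  assumes "{Some 0, Some c} \<in> farey_lines" "0 < x" "x < c"
  shows "{Some 0, Some c} \<in> zero_fan x"
proof -
  obtain k :: int where k: "c = 1 / of_int k"
    using farey_line_through_0[OF assms(1)] by blast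
  then have "0 < (1 / of_int k :: rat)" "x < 1 / of_int k" using assms(2,3) by linarith+
  then have "0 < k" "of_int k * x < 1" by (simp_all add: field_simps)
  then show ?thesis
    unfolding zero_fan_def k by (intro image_eqI[of _ _ "nat k"]) simp_all
qed

lemma farey_crossing_None_subset:
  assumes "0 < x"
  shows "farey_crossing None (Some x) \<subseteq> zero_fan x \<union> farey_crossing (Some 0) (Some x)"
proof
  fix L assume "L \<in> farey_crossing None (Some x)"
  then obtain s t where L: "L \<in> farey_lines" "L = {s, t}" "linked s t None (Some x)"
    unfolding farey_crossing_def by blast
  then obtain a b where ab: "s = Some a" "t = Some b"
    using linked_imp_distinct by (cases s; cases t) auto
  have below: "(a - x) * (b - x) < 0"
    using L(3) ab by (simp add: linked_Some_iff)
  consider "a = 0" | "b = 0" | "0 < a * b"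
    using farey_line_Some_Some_product_nonneg L(1,2) ab by fastforce
  then show "L \<in> zero_fan x \<union> farey_crossing (Some 0) (Some x)"
  proof cases
    case 1
    then have "L \<in> zero_fan x"
      using farey_line_0_mem_zero_fan[of b x] L(1,2) ab below assms
      by (simp add: zero_less_mult_iff)
    then show ?thesis ..
  next
    case 2
    then have "L \<in> zero_fan x"
      using farey_line_0_mem_zero_fan[of a x] L(1,2) ab below assms
      by (simp add: zero_less_mult_iff insert_commute)
    then show ?thesis ..
  next
    case 3
    then have "linked s t (Some 0) (Some x)"
      using mult_pos_neg[OF 3 below] ab by (simp add: linked_Some_iff mult_ac)
    then show ?thesis using L unfolding farey_crossing_def by blast
  qed
qed

lemma zero_fan_subset_farey_crossing:
  assumes "0 < x"
  shows "zero_fan x \<subseteq> farey_crossing None (Some x)"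
proof
  fix L assume "L \<in> zero_fan x"
  then obtain k :: nat where k: "0 < k" "of_nat k * x < 1" "L = {Some 0, Some (1 / of_nat k)}"
    unfolding zero_fan_def by blast
  then have "x < 1 / of_nat k" by (simp add: field_simps)
  then have "linked (Some 0) (Some (1 / of_nat k)) None (Some x)"
    using assms by (simp add: linked_Some_iff mult_less_0_iff)
  moreover have "L \<in> farey_lines"
    using farey_line_0_inverse[of "int k"] k by simp
  ultimately show "L \<in> farey_crossing None (Some x)"
    using k(3) unfolding farey_crossing_def by blast
qed

lemma farey_crossing_0_subset_None:
  assumes "0 < x" "x < 1"
  shows "farey_crossing (Some 0) (Some x) \<subseteq> farey_crossing None (Some x)"
proof
  fix L assume "L \<in> farey_crossing (Some 0) (Some x)"
  then obtain s t where L: "L \<in> farey_lines" "L = {s, t}" "linked s t (Some 0) (Some x)"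
    unfolding farey_crossing_def by blast
  then have "s \<noteq> t" using farey_line_endpoints_distinct by blast
  then show "L \<in> farey_crossing None (Some x)"
  proof (cases rule: geodesic_cases)
    case (vertical b)
    then have "b * (b - x) < 0" using L(3) by (simp add: linked_Some_iff)
    then have "linked None (Some b) (Some 0) (Some 1)"
      using assms by (auto simp: linked_Some_iff mult_less_0_iff)
    then show ?thesis
      using farey_lines_not_linked L(1,2) vertical(2) farey_line_0_1 by metis
  next
    case (semicircle a b)
    then have "a * b * ((a - x) * (b - x)) < 0"
      using L(3) by (simp add: linked_Some_iff mult_ac)
    moreover have "0 \<le> a * b"
      using farey_line_Some_Some_product_nonneg L(1,2) semicircle by simp
    ultimately have "(a - x) * (b - x) < 0"
      using mult_less_0_iff[of "a * b" "(a - x) * (b - x)"] by auto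
    then have "linked s t None (Some x)"
      using semicircle by (simp add: linked_Some_iff)
    then show ?thesis using L unfolding farey_crossing_def by blast
  qed
qed

lemma farey_crossing_None_eq:
  assumes "0 < x" "x < 1"
  shows "farey_crossing None (Some x) = zero_fan x \<union> farey_crossing (Some 0) (Some x)"
  using farey_crossing_None_subset zero_fan_subset_farey_crossing farey_crossing_0_subset_None assms
  by blast

lemma zero_fan_disjoint: "zero_fan x \<inter> farey_crossing (Some 0) r = {}"
proof -
  have "Some 0 \<in> L" if "L \<in> zero_fan x" for L
    using that unfolding zero_fan_def by auto
  moreover have "Some 0 \<notin> L" if "L \<in> farey_crossing (Some 0) r" for L
    using that unfolding farey_crossing_def by (auto dest: linked_imp_distinct)
  ultimately show ?thesis by blast
qed

lemma card_zero_fan: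
  assumes "0 < p" "0 < q"
  shows "finite (zero_fan (of_nat q / of_nat p))"
    and "card (zero_fan (of_nat q / of_nat p)) = (p - 1) div q"
proof -
  let ?line = "\<lambda>k::nat. {Some 0, Some (1 / of_nat k :: rat)}" and ?n = "(p - 1) div q"
  have below_iff: "of_nat k * (of_nat q / of_nat p) < (1::rat) \<longleftrightarrow> k \<le> ?n" for k
  proof -
    have "of_nat k * (of_nat q / of_nat p) < (1::rat) \<longleftrightarrow> k * q < p"
      using assms(1) by (simp add: field_simps flip: of_nat_mult)
    also have "\<dots> \<longleftrightarrow> k \<le> ?n"
      using assms by (auto simp: less_eq_div_iff_mult_less_eq)
    finally show ?thesis .
  qed
  have "{k. 0 < k \<and> of_nat k * (of_nat q / of_nat p) < (1::rat)} = {1..?n}"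
    unfolding below_iff by auto
  then have fan: "zero_fan (of_nat q / of_nat p) = ?line ` {1..?n}"
    unfolding zero_fan_def by simp
  have "inj_on ?line {1..?n}"
  proof (rule inj_onI)
    fix k l :: nat
    assume "k \<in> {1..?n}" "?line k = ?line l"
    then have "(1 / of_nat k :: rat) = 1 / of_nat l" by (auto simp: doubleton_eq_iff)
    then show "k = l" by simp
  qed
  then show "finite (zero_fan (of_nat q / of_nat p))"
    and "card (zero_fan (of_nat q / of_nat p)) = ?n"
    unfolding fan by (simp_all add: card_image)
qed

(* The continued fraction step y \<mapsto> 1/y - k. *)
definition cf_step_mat :: "int \<Rightarrow> mat2" where
  "cf_step_mat k = (- k, 1, 1, 0)"

lemma cf_step_mat_det: "\<bar>mat2_det (cf_step_mat k)\<bar> = 1"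
  by (simp add: cf_step_mat_def)

lemma moebius_cf_step_mat:
  "moebius (cf_step_mat k) (Some 0) = None"
  "y \<noteq> 0 \<Longrightarrow> moebius (cf_step_mat k) (Some y) = Some (1 / y - of_int k)"
  by (simp_all add: cf_step_mat_def moebius_def proj_def field_simps)

lemma card_farey_crossing_0:
  assumes "0 < p" "0 < q"
  shows "card (farey_crossing (Some 0) (Some (of_nat q / of_nat p))) =
      card (farey_crossing None (Some (of_nat (p mod q) / of_nat q)))"
    and "finite (farey_crossing (Some 0) (Some (of_nat q / of_nat p))) \<longleftrightarrow>
      finite (farey_crossing None (Some (of_nat (p mod q) / of_nat q)))"
proof -
  let ?k = "int (p div q)" and ?x = "of_nat q / of_nat p :: rat"
  have "(of_nat p :: rat) = of_nat q * of_nat (p div q) + of_nat (p mod q)"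
    by (metis of_nat_add of_nat_mult mult_div_mod_eq)
  then have "1 / ?x - of_int ?k = of_nat (p mod q) / of_nat q"
    using assms by (simp add: field_simps)
  then have "farey_crossing None (Some (of_nat (p mod q) / of_nat q)) =
      farey_crossing (moebius (cf_step_mat ?k) (Some 0)) (moebius (cf_step_mat ?k) (Some ?x))"
    using assms by (simp add: moebius_cf_step_mat)
  then show "card (farey_crossing (Some 0) (Some ?x)) =
      card (farey_crossing None (Some (of_nat (p mod q) / of_nat q)))"
    and "finite (farey_crossing (Some 0) (Some ?x)) \<longleftrightarrow>
      finite (farey_crossing None (Some (of_nat (p mod q) / of_nat q)))"
    using card_farey_crossing_moebius[OF cf_step_mat_det] by simp_all
qed

lemma card_farey_crossing_None:
  assumes "coprime p q" "q < p"
  shows "finite (farey_crossing None (Some (of_nat q / of_nat p))) \<and>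
    card (farey_crossing None (Some (of_nat q / of_nat p))) = euclid_sub p q - 1"
  using assms
proof (induction p arbitrary: q rule: less_induct)
  case (less p)
  consider "q = 0" | "0 < q" by blast
  then show ?case
  proof cases
    case 1
    then show ?thesis using farey_crossing_farey_line[OF farey_line_None_0] by simp
  next
    case 2
    define x where "x = (of_nat q / of_nat p :: rat)"
    have "0 < x" "x < 1" using 2 less.prems by (simp_all add: x_def)
    note split = farey_crossing_None_eq[OF this]
    have p: "0 < p" using less.prems by simp
    have IH: "finite (farey_crossing None (Some (of_nat (p mod q) / of_nat q))) \<and>
        card (farey_crossing None (Some (of_nat (p mod q) / of_nat q))) =
          euclid_sub q (p mod q) - 1"
      using less.IH[OF less.prems(2)] less.prems(1) 2 by (simp add: coprime_commute)
    have "finite (farey_crossing None (Some x))"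
      using split IH card_farey_crossing_0[OF p 2] card_zero_fan[OF p 2] by (simp add: x_def)
    moreover have "card (farey_crossing None (Some x)) =
        (p - 1) div q + (euclid_sub q (p mod q) - 1)"
      using split IH card_farey_crossing_0[OF p 2] card_zero_fan[OF p 2]
      by (simp add: x_def card_Un_disjoint zero_fan_disjoint)
    ultimately show ?thesis
      using euclid_sub_pred_div_mod[OF less.prems(1) 2] unfolding x_def by simp
  qed
qed

theorem theorem17:
  fixes p q :: nat and a b c d :: int
  assumes "0 < q" and "q < p" and "coprime p q"
    and "\<bar>a * d - b * c\<bar> = 1"
  shows "d_c (slope (a, b))
             (slope (int q * a + int p * c, int q * b + int p * d))
         = euclid_sub p q - 1"
proof -
  define A :: mat2 where "A = (a, b, c, d)"
  define x :: rat where "x = of_nat q / of_nat p"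
  have det: "\<bar>mat2_det A\<bar> = 1" using assms(4) by (simp add: A_def)
  have meridian1: "slope (a, b) = moebius A None"
    by (simp add: A_def moebius_def slope_eq_proj)
  have "slope (int q, int p) = Some x"
    using assms(2) by (simp add: slope_def x_def)
  then have meridian2: "slope (int q * a + int p * c, int q * b + int p * d) = moebius A (Some x)"
    using assms(2) moebius_slope[of "(int q, int p)" A] by (simp add: A_def algebra_simps)
  have "inj (moebius A)"
    using det by (intro inj_moebius) auto
  then have "moebius A None \<noteq> moebius A (Some x)"
    by (simp add: inj_eq)
  then show ?thesis
    unfolding meridian1 meridian2
    using d_c_eq_card_farey_crossing card_farey_crossing_moebius(1)[OF det]
      card_farey_crossing_None[OF assms(3,2)]
    by (simp add: x_def)
qed

end
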